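(* Let $N\ge 3$, $m>0$, and let $\phi$ be a positive solution of $$\phi_{\xi\xi}+\Big(\frac{N+1}{\xi}-\frac{\xi}{2}\Big)\phi_\xi-\phi+\phi(\xi\phi_\xi+N\phi)=0$$ on some interval $(l,\infty)$, $l>0$, with $\phi(\xi)\xi^2\to m$ as $\xi\to\infty$. Let $\ell:=\inf\{l>0:\ \phi\text{ can be defined (as a solution) in }(l,\infty)\}$. Then precisely one of the following holds: (1) $\phi$ is unbounded and $\phi(\xi)\to\infty$ as $\xi\to\ell^+$; (2) $\phi$ is bounded, $\ell>0$ and $\lim_{\xi\to\ell^+}\phi(\xi)=0$; (3) $\phi$ is bounded, $\ell=0$, $\lim_{\xi\to 0^+}\phi(\xi)$ exists and $\phi'(\xi)\to 0$ as $\xi\to 0^+$. *)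

theory Defs
  imports "HOL-Analysis.Analysis"
begin

definition pos_sol :: "nat \<Rightarrow> (real \<Rightarrow> real) \<Rightarrow> real \<Rightarrow> bool" where
  "pos_sol N \<psi> l \<longleftrightarrow>
     (\<forall>\<xi>>l. \<psi> differentiable (at \<xi>) \<and> deriv \<psi> differentiable (at \<xi>) \<and> \<psi> \<xi> > 0 \<and>
        deriv (deriv \<psi>) \<xi> + ((real N + 1) / \<xi> - \<xi> / 2) * deriv \<psi> \<xi> - \<psi> \<xi>
          + \<psi> \<xi> * (\<xi> * deriv \<psi> \<xi> + real N * \<psi> \<xi>) = 0)"

definition ext_inf :: "nat \<Rightarrow> (real \<Rightarrow> real) \<Rightarrow> real \<Rightarrow> real" where
  "ext_inf N \<phi> l0 = Inf {l. l > 0 \<and> (\<exists>\<psi>. pos_sol N \<psi> l \<and> (\<forall>\<xi>>max l l0. \<psi> \<xi> = \<phi> \<xi>))}"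

end

(*
  Everything rests on the Lyapunov function
    F(xi) = xi^(N+1) (phi'(xi) + xi phi(xi) (phi(xi) - 1) / 2),
  whose derivative -xi^(N+1) (N/2 phi + (N/2 - 1) phi^2) is nonpositive for N >= 2 and which
  equals xi^(N+2) phi (phi - 1) / 2 at critical points of phi.

  Written as a first-order system the equation has unique solutions (Gronwall), so all extensions
  of phi glue to a positive solution on (ell, infinity). If this solution is unbounded it cannot
  oscillate near ell, because along critical points the monotonicity of F forces the critical
  values above 1 to decrease; hence phi tends to infinity. If it is bounded by B and ell = 0, then
  -C xi^(N+2) <= F <= 0, since otherwise phi' = F / xi^(N+1) - xi phi (phi - 1) / 2 would drive
  phi out of (0, B] near 0; hence |phi'| <= D xi. If it is bounded and ell > 0, then F and hence
  phi' stay bounded near ell, so by Picard-Lindeloef the solution continues past ell; a positive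
  value at ell would then give a positive solution on a larger interval, contradicting the
  minimality of ell.
*)
theory Submission
  imports Defs
begin

lemma bounded_on_Icc:
  fixes k :: "real \<Rightarrow> real"
  assumes "continuous_on {c..d} k"
  obtains K where "\<And>x. x \<in> {c..d} \<Longrightarrow> \<bar>k x\<bar> \<le> K"
proof -
  have "bounded (k ` {c..d})"
    by (intro compact_imp_bounded compact_continuous_image assms compact_Icc)
  then obtain K where "\<forall>x\<in>{c..d}. \<bar>k x\<bar> \<le> K" by (auto simp: bounded_iff)
  then show thesis by (intro that[of K]) auto
qed

lemma gronwall_vanishing:
  fixes E E' :: "real \<Rightarrow> real"
  assumes deriv: "\<And>z. z \<in> {c..d} \<Longrightarrow> (E has_real_derivative E' z) (at z)"
    and bound: "\<And>z. z \<in> {c..d} \<Longrightarrow> \<bar>E' z\<bar> \<le> K * E z"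
    and nonneg: "\<And>z. E z \<ge> 0"
    and t: "t \<in> {c..d}" "E t = 0" and x: "x \<in> {c..d}"
  shows "E x = 0"
proof (cases "t \<le> x")
  case True
  have "E x * exp (- K * x) \<le> E t * exp (- K * t)"
  proof (rule DERIV_nonpos_imp_nonincreasing[OF True])
    fix z assume "t \<le> z" "z \<le> x"
    then have z: "z \<in> {c..d}" using t x by auto
    have "E' z * exp (- K * z) \<le> K * E z * exp (- K * z)"
      using bound[OF z] by (intro mult_right_mono) auto
    then show "\<exists>D. ((\<lambda>z. E z * exp (- K * z)) has_real_derivative D) (at z) \<and> D \<le> 0"
      by (intro exI conjI) (auto intro!: derivative_eq_intros deriv[OF z] simp: algebra_simps)
  qed
  then show ?thesis using t nonneg[of x] by (simp add: mult_le_0_iff)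
next
  case False
  have "E x * exp (K * x) \<le> E t * exp (K * t)"
  proof (rule DERIV_nonneg_imp_nondecreasing[of x t])
    fix z assume "x \<le> z" "z \<le> t"
    then have z: "z \<in> {c..d}" using t x by auto
    have "- (K * E z) * exp (K * z) \<le> E' z * exp (K * z)"
      using bound[OF z] by (intro mult_right_mono) auto
    then show "\<exists>D. ((\<lambda>z. E z * exp (K * z)) has_real_derivative D) (at z) \<and> D \<ge> 0"
      by (intro exI conjI) (auto intro!: derivative_eq_intros deriv[OF z] simp: algebra_simps)
  qed (use False in auto)
  then show ?thesis using t nonneg[of x] by (simp add: mult_le_0_iff)
qed

lemma interior_min_critical:
  fixes f :: "real \<Rightarrow> real"
  assumes deriv: "\<And>x. x \<in> {a..b} \<Longrightarrow> (f has_real_derivative f' x) (at x)"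
    and c: "c \<in> {a..b}" "f c < f a" "f c < f b"
  obtains x where "x \<in> {a<..<b}" "f' x = 0" "f x \<le> f c"
proof -
  have "continuous_on {a..b} f"
    using deriv by (meson DERIV_isCont continuous_at_imp_continuous_on)
  then obtain x where x: "x \<in> {a..b}" and min: "\<And>y. y \<in> {a..b} \<Longrightarrow> f x \<le> f y"
    using continuous_attains_inf[OF compact_Icc] c(1) by blast
  have "f x \<le> f c" using min c(1) .
  then have "x \<in> {a<..<b}" using x c by (auto simp: le_less)
  moreover have "f' x = 0"
  proof (rule DERIV_local_min[OF deriv[OF x]])
    show "0 < min (x - a) (b - x)" using \<open>x \<in> {a<..<b}\<close> by simp
    show "\<forall>y. \<bar>x - y\<bar> < min (x - a) (b - x) \<longrightarrow> f x \<le> f y"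
      by (auto intro!: min simp: abs_less_iff)
  qed
  ultimately show thesis using that \<open>f x \<le> f c\<close> by blast
qed

lemma interior_max_critical:
  fixes f :: "real \<Rightarrow> real"
  assumes "\<And>x. x \<in> {a..b} \<Longrightarrow> (f has_real_derivative f' x) (at x)"
    and "c \<in> {a..b}" "f a < f c" "f b < f c"
  obtains x where "x \<in> {a<..<b}" "f' x = 0" "f c \<le> f x"
  using interior_min_critical[of a b "\<lambda>x. - f x" "\<lambda>x. - f' x" c] assms
  by (auto intro: DERIV_minus)

lemma has_real_derivative_inverse_power:
  assumes "0 < z" "1 \<le> N"
  shows "((\<lambda>z. c / (real N * z ^ N)) has_real_derivative - (c / z ^ (N + 1))) (at z)"
proof -
  obtain k where k: "N = Suc k" using assms(2) by (cases N) auto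
  have deriv: "((\<lambda>z. c / real N * inverse (z ^ N)) has_real_derivative
      c / real N * - (real N * z ^ (N - Suc 0) * (inverse (z ^ N) * inverse (z ^ N)))) (at z)"
    using DERIV_inverse_fun[OF DERIV_pow[of N z], of UNIV] assms(1) by (intro DERIV_cmult) auto
  have eq: "c / real N * - (real N * z ^ (N - Suc 0) * (inverse (z ^ N) * inverse (z ^ N)))
      = - (c / z ^ (N + 1))"
    using assms(1) unfolding k by (simp add: field_simps del: of_nat_Suc)
  have "(\<lambda>z. c / (real N * z ^ N)) = (\<lambda>z. c / real N * inverse (z ^ N))"
    by (simp add: fun_eq_iff divide_inverse mult.assoc)
  then show ?thesis using DERIV_cong[OF deriv eq] by simp
qed

lemma inverse_power_tendsto_infinity:
  assumes "0 < c" "1 \<le> N"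
  shows "filterlim (\<lambda>s. c / (real N * s ^ N)) at_top (at_right 0)"
proof -
  have "filterlim (\<lambda>s. c / real N * inverse s ^ N) at_top (at_right 0)"
    using assms
    by (intro filterlim_tendsto_pos_mult_at_top[OF tendsto_const]
        filterlim_pow_at_top filterlim_inverse_at_top_right) auto
  then show ?thesis by (simp add: power_inverse divide_inverse mult.assoc)
qed

lemma deriv_above_pole_imp_unbounded_below:
  fixes f f' :: "real \<Rightarrow> real"
  assumes "0 < x" "0 < c" "1 \<le> N"
    and deriv: "\<And>z. 0 < z \<Longrightarrow> z \<le> x \<Longrightarrow> (f has_real_derivative f' z) (at z)"
    and lower: "\<And>z. 0 < z \<Longrightarrow> z \<le> x \<Longrightarrow> c / z ^ (N + 1) - K \<le> f' z"
  obtains s where "0 < s" "s \<le> x" "f s < L"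
proof -
  define H where "H z = f z + c / (real N * z ^ N) + K * z" for z
  have H_mono: "H s \<le> H x" if "0 < s" "s \<le> x" for s
  proof (rule DERIV_nonneg_imp_nondecreasing[OF \<open>s \<le> x\<close>])
    fix z assume z: "s \<le> z" "z \<le> x"
    then have "(H has_real_derivative f' z + - (c / z ^ (N + 1)) + K * 1) (at z)"
      unfolding H_def[abs_def] using that assms
      by (intro DERIV_add DERIV_cmult DERIV_ident deriv has_real_derivative_inverse_power) auto
    moreover have "0 \<le> f' z + - (c / z ^ (N + 1)) + K * 1" using lower[of z] z that by simp
    ultimately show "\<exists>D. (H has_real_derivative D) (at z) \<and> 0 \<le> D" by blast
  qed
  obtain b where b: "0 < b" "\<And>s. 0 < s \<Longrightarrow> s < b \<Longrightarrow> H x + \<bar>K\<bar> * x - L < c / (real N * s ^ N)"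
    using inverse_power_tendsto_infinity[OF assms(2,3)]
    unfolding filterlim_at_top_dense eventually_at_right_field by blast
  define s where "s = min b x / 2"
  have s: "0 < s" "s < b" "s \<le> x" using b \<open>0 < x\<close> by (auto simp: s_def)
  have "- \<bar>K\<bar> * s \<le> K * s" using s(1) by (intro mult_right_mono) auto
  moreover have "\<bar>K\<bar> * s \<le> \<bar>K\<bar> * x" using s(3) by (intro mult_left_mono) auto
  ultimately have "- (\<bar>K\<bar> * x) \<le> K * s" by simp
  then have "f s < L" using H_mono[OF s(1,3)] b(2)[OF s(1,2)] unfolding H_def by simp
  then show thesis using that s by simp
qed

lemma deriv_bounded_imp_tendsto_at_right:
  fixes f f' :: "real \<Rightarrow> real"
  assumes "a < b" and deriv: "\<And>x. x \<in> {a<..<b} \<Longrightarrow> (f has_real_derivative f' x) (at x)"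
    and bound: "\<And>x. x \<in> {a<..<b} \<Longrightarrow> \<bar>f' x\<bar> \<le> C"
  obtains L where "(f \<longlongrightarrow> L) (at_right a)"
proof -
  have "C-lipschitz_on {a<..<b} f"
  proof (rule lipschitz_onI)
    fix x y assume "x \<in> {a<..<b}" "y \<in> {a<..<b}"
    then show "dist (f x) (f y) \<le> C * dist x y"
      using field_differentiable_bound[of "{a<..<b}" f f' C x y] deriv bound
      by (auto simp: dist_norm has_field_derivative_at_within)
  next
    show "0 \<le> C" using bound[of "(a + b) / 2"] assms(1) by fastforce
  qed
  then have "uniformly_continuous_on {a<..<b} f" by (rule lipschitz_on_uniformly_continuous)
  moreover have "a \<in> closure {a<..<b}" using assms(1) by simp
  ultimately obtain L where "(f \<longlongrightarrow> L) (at a within {a<..<b})"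
    by (rule uniformly_continuous_on_extension_at_closure)
  moreover have "at a within {a<..<b} = at_right a"
    by (rule at_within_nhd[of _ "{..<b}"]) (use assms(1) in auto)
  ultimately show thesis using that by simp
qed

lemma has_vector_derivative_fst_snd:
  assumes "(Y has_vector_derivative (u, v)) (at t)"
  shows "((\<lambda>t. fst (Y t)) has_real_derivative u) (at t)"
    and "((\<lambda>t. snd (Y t)) has_real_derivative v) (at t)"
  using has_derivative_fst[OF assms[unfolded has_vector_derivative_def]]
    has_derivative_snd[OF assms[unfolded has_vector_derivative_def]]
  by (simp_all add: has_real_derivative_iff_has_vector_derivative has_vector_derivative_def)

section \<open>Local existence for ordinary differential equations\<close>

lemma norm_integral_diff_le:
  fixes g :: "real \<Rightarrow> 'a::banach"
  assumes cont: "continuous_on {a..b} g" and bound: "\<And>s. s \<in> {a..b} \<Longrightarrow> norm (g s) \<le> L"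
    and "u \<in> {a..b}" "v \<in> {a..b}"
  shows "norm (integral {a..u} g - integral {a..v} g) \<le> L * \<bar>u - v\<bar>"
proof -
  have ordered: "norm (integral {a..u} g - integral {a..v} g) \<le> L * (u - v)"
    if uv: "u \<in> {a..b}" "v \<in> {a..b}" "v \<le> u" for u v
  proof -
    have "g integrable_on {a..u}"
      using uv by (auto intro!: integrable_continuous_interval continuous_on_subset[OF cont])
    then have "integral {a..u} g - integral {a..v} g = integral {v..u} g"
      using Henstock_Kurzweil_Integration.integral_combine[where a = a and c = v and b = u and f = g] uv
      by (simp add: algebra_simps)
    also have "norm \<dots> \<le> L * (u - v)"
      using uv by (intro integral_bound continuous_on_subset[OF cont] bound) auto
    finally show ?thesis .
  qed
  show ?thesis
  proof (cases "v \<le> u")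
    case True
    then show ?thesis using ordered[of u v] assms by simp
  next
    case False
    then show ?thesis using ordered[of v u] assms by (simp add: norm_minus_commute)
  qed
qed

text \<open>Freezing the upper limit outside \<open>[a, b]\<close> turns the indefinite integral into a bounded
  continuous function on the whole line.\<close>

definition clamped_integral :: "real \<Rightarrow> real \<Rightarrow> (real \<Rightarrow> 'a::banach) \<Rightarrow> real \<Rightarrow> 'a" where
  "clamped_integral a b g x = integral {a..max a (min b x)} g"

lemma clamped_integral_eq: "x \<in> {a..b} \<Longrightarrow> clamped_integral a b g x = integral {a..x} g"
  by (simp add: clamped_integral_def)

lemma clamped_integral_diff:
  assumes "continuous_on {a..b} g" "continuous_on {a..b} h" "a \<le> b"
  shows "clamped_integral a b (\<lambda>s. g s - h s) x = clamped_integral a b g x - clamped_integral a b h x"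
  unfolding clamped_integral_def using assms
  by (intro integral_diff integrable_continuous_interval continuous_on_subset[OF assms(1)]
      continuous_on_subset[OF assms(2)]) auto

lemma norm_clamped_integral_diff_le:
  assumes "continuous_on {a..b} g" "\<And>s. s \<in> {a..b} \<Longrightarrow> norm (g s) \<le> L" "\<tau> \<in> {a..b}"
  shows "norm (clamped_integral a b g x - integral {a..\<tau>} g) \<le> L * (b - a)"
proof -
  let ?x = "max a (min b x)"
  have "?x \<in> {a..b}" using assms(3) by auto
  then have "norm (clamped_integral a b g x - integral {a..\<tau>} g) \<le> L * \<bar>?x - \<tau>\<bar>"
    unfolding clamped_integral_def using assms by (intro norm_integral_diff_le)
  also have "\<dots> \<le> L * (b - a)"
    using assms(3) order_trans[OF norm_ge_zero assms(2)[OF assms(3)]] by (intro mult_left_mono) auto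
  finally show ?thesis .
qed

lemma clamped_integral_bcontfun:
  assumes "a \<le> b" "continuous_on {a..b} g"
  shows "(\<lambda>x. c + clamped_integral a b g x) \<in> bcontfun"
proof -
  have int_cont: "continuous_on {a..b} (\<lambda>u. c + integral {a..u} g)"
    by (intro continuous_intros indefinite_integral_continuous_1 integrable_continuous_interval assms)
  have "continuous_on UNIV (\<lambda>x. c + clamped_integral a b g x)"
    unfolding clamped_integral_def using assms(1)
    by (intro continuous_on_compose2[OF int_cont, of UNIV "\<lambda>x. max a (min b x)"] continuous_intros)
       auto
  moreover have "compact ((\<lambda>u. c + integral {a..u} g) ` {a..b})"
    by (intro compact_continuous_image compact_Icc int_cont)
  moreover have "range (\<lambda>x. c + clamped_integral a b g x) \<subseteq> (\<lambda>u. c + integral {a..u} g) ` {a..b}"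
    unfolding clamped_integral_def using assms(1) by auto
  ultimately show ?thesis by (auto simp: bcontfun_def intro: bounded_subset compact_imp_bounded)
qed

lemma has_vector_derivative_clamped_integral:
  assumes "continuous_on {a..b} g" "t \<in> {a<..<b}"
  shows "((\<lambda>x. c + clamped_integral a b g x) has_vector_derivative g t) (at t)"
proof -
  have "((\<lambda>u. integral {a..u} g) has_vector_derivative g t) (at t within {a..b})"
    using assms by (intro integral_has_vector_derivative) auto
  then have "((\<lambda>u. c + integral {a..u} g) has_vector_derivative g t) (at t)"
    using assms(2) at_within_interior[of t "{a..b}"] by (auto intro!: derivative_eq_intros)
  then show ?thesis
    by (rule has_vector_derivative_transform_within_open[where S = "{a<..<b}"])
       (use assms(2) in \<open>auto simp: clamped_integral_eq\<close>)
qed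

text \<open>Fixed points of \<open>picard_map\<close> solve \<open>y x = y0 + \<integral>\<^sub>\<tau>\<^sup>x f s (y s) ds\<close> on \<open>[a, b]\<close>.\<close>

definition picard_map ::
    "(real \<Rightarrow> 'a::banach \<Rightarrow> 'a) \<Rightarrow> real \<Rightarrow> real \<Rightarrow> real \<Rightarrow> 'a \<Rightarrow> (real \<Rightarrow> 'a) \<Rightarrow> real \<Rightarrow> 'a" where
  "picard_map f a b \<tau> y0 y x =
     y0 - integral {a..\<tau>} (\<lambda>s. f s (y s)) + clamped_integral a b (\<lambda>s. f s (y s)) x"

context
  fixes f :: "real \<Rightarrow> 'a::banach \<Rightarrow> 'a" and y0 :: 'a and a b \<tau> R M K :: real
  assumes cont: "continuous_on ({a..b} \<times> cball y0 R) (\<lambda>(t, y). f t y)"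
    and bound: "\<And>t y. t \<in> {a..b} \<Longrightarrow> y \<in> cball y0 R \<Longrightarrow> norm (f t y) \<le> M"
    and lipschitz: "\<And>t y z. t \<in> {a..b} \<Longrightarrow> y \<in> cball y0 R \<Longrightarrow> z \<in> cball y0 R \<Longrightarrow>
      norm (f t y - f t z) \<le> K * norm (y - z)"
    and "0 \<le> K" and \<tau>: "\<tau> \<in> {a..b}"
begin

lemma continuous_on_picard_integrand:
  "continuous_on UNIV y \<Longrightarrow> (\<And>s. y s \<in> cball y0 R) \<Longrightarrow> continuous_on {a..b} (\<lambda>s. f s (y s))"
  by (intro continuous_on_compose2[OF cont, where f = "\<lambda>s. (s, y s)", simplified])
     (auto intro!: continuous_intros intro: continuous_on_subset)

lemma dist_picard_map_le:
  assumes "continuous_on UNIV y" "\<And>s. y s \<in> cball y0 R"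
  shows "dist y0 (picard_map f a b \<tau> y0 y x) \<le> M * (b - a)"
proof -
  have "norm (clamped_integral a b (\<lambda>s. f s (y s)) x - integral {a..\<tau>} (\<lambda>s. f s (y s))) \<le> M * (b - a)"
    using assms \<tau> bound by (intro norm_clamped_integral_diff_le continuous_on_picard_integrand) auto
  then show ?thesis by (simp add: picard_map_def dist_norm norm_minus_commute)
qed

lemma dist_picard_map_diff_le:
  assumes "continuous_on UNIV y" "\<And>s. y s \<in> cball y0 R"
    and "continuous_on UNIV z" "\<And>s. z s \<in> cball y0 R"
    and close: "\<And>s. norm (y s - z s) \<le> D"
  shows "dist (picard_map f a b \<tau> y0 y x) (picard_map f a b \<tau> y0 z x) \<le> K * (b - a) * D"
proof -
  let ?g = "\<lambda>s. f s (y s)" and ?h = "\<lambda>s. f s (z s)"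
  have g: "continuous_on {a..b} ?g" and h: "continuous_on {a..b} ?h"
    using assms by (auto intro: continuous_on_picard_integrand)
  have "norm (?g s - ?h s) \<le> K * D" if "s \<in> {a..b}" for s
  proof -
    have "norm (?g s - ?h s) \<le> K * norm (y s - z s)" using that assms(2,4) by (intro lipschitz)
    also have "\<dots> \<le> K * D" using close \<open>0 \<le> K\<close> by (intro mult_left_mono)
    finally show ?thesis .
  qed
  then have "norm (clamped_integral a b (\<lambda>s. ?g s - ?h s) x - integral {a..\<tau>} (\<lambda>s. ?g s - ?h s))
      \<le> K * D * (b - a)"
    using g h \<tau> by (intro norm_clamped_integral_diff_le continuous_intros) auto
  moreover have "integral {a..\<tau>} (\<lambda>s. ?g s - ?h s) = integral {a..\<tau>} ?g - integral {a..\<tau>} ?h"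
    using \<tau> by (intro integral_diff integrable_continuous_interval continuous_on_subset[OF g]
        continuous_on_subset[OF h]) auto
  then have "picard_map f a b \<tau> y0 y x - picard_map f a b \<tau> y0 z x
      = clamped_integral a b (\<lambda>s. ?g s - ?h s) x - integral {a..\<tau>} (\<lambda>s. ?g s - ?h s)"
    using clamped_integral_diff[OF g h] \<tau> by (simp add: picard_map_def algebra_simps)
  ultimately show ?thesis by (simp add: dist_norm mult_ac)
qed

lemma picard_fixed_point:
  assumes "0 \<le> R" and small: "M * (b - a) \<le> R" "K * (b - a) < 1"
  obtains y where "continuous_on {a..b} (\<lambda>s. f s (y s))" "y = picard_map f a b \<tau> y0 y"
proof -
  have "a \<le> b" using \<tau> by simp
  define S where "S = (PiC UNIV (\<lambda>_. cball y0 R) :: (real \<Rightarrow>\<^sub>C 'a) set)"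
  have in_S: "Y \<in> S \<longleftrightarrow> (\<forall>x. apply_bcontfun Y x \<in> cball y0 R)" for Y
    unfolding S_def mem_PiC_iff by auto
  define T where "T Y = Bcontfun (picard_map f a b \<tau> y0 (apply_bcontfun Y))" for Y
  have T_apply: "apply_bcontfun (T Y) = picard_map f a b \<tau> y0 (apply_bcontfun Y)" if "Y \<in> S" for Y
    using clamped_integral_bcontfun[OF \<open>a \<le> b\<close> continuous_on_picard_integrand] that in_S
    by (simp add: T_def picard_map_def[abs_def] Bcontfun_inverse)
  have "T ` S \<subseteq> S"
  proof clarify
    fix Y assume "Y \<in> S"
    then have "dist y0 (apply_bcontfun (T Y) x) \<le> R" for x
      using order_trans[OF dist_picard_map_le[of "apply_bcontfun Y" x] small(1)]
      by (simp add: in_S T_apply)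
    then show "T Y \<in> S" by (simp add: in_S)
  qed
  moreover have "dist (T Y) (T Z) \<le> K * (b - a) * dist Y Z" if "Y \<in> S" "Z \<in> S" for Y Z
  proof (rule dist_bound)
    fix x
    show "dist (apply_bcontfun (T Y) x) (apply_bcontfun (T Z) x) \<le> K * (b - a) * dist Y Z"
      unfolding T_apply[OF that(1)] T_apply[OF that(2)]
      using that in_S dist_bounded[of Y _ Z] by (intro dist_picard_map_diff_le) (auto simp: dist_norm)
  qed
  moreover have "complete S" unfolding S_def by (simp add: complete_eq_closed closed_PiC)
  moreover have "const_bcontfun y0 \<in> S" using \<open>0 \<le> R\<close> by (simp add: in_S const_bcontfun.rep_eq)
  moreover have "0 \<le> K * (b - a)" using \<open>0 \<le> K\<close> \<open>a \<le> b\<close> by simp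
  ultimately have "\<exists>!Y\<in>S. T Y = Y" using small(2) by (intro Banach_fix) auto
  then obtain Y where Y: "Y \<in> S" "T Y = Y" by blast
  show thesis
  proof (rule that)
    show "continuous_on {a..b} (\<lambda>s. f s (apply_bcontfun Y s))"
      using Y(1) in_S by (intro continuous_on_picard_integrand) auto
    show "apply_bcontfun Y = picard_map f a b \<tau> y0 (apply_bcontfun Y)"
      using T_apply[OF Y(1)] Y(2) by simp
  qed
qed

lemma picard_local_existence:
  assumes "0 \<le> R" "M * (b - a) \<le> R" "K * (b - a) < 1"
  obtains y where "y \<tau> = y0" "\<And>t. t \<in> {a<..<b} \<Longrightarrow> (y has_vector_derivative f t (y t)) (at t)"
proof -
  obtain y where cont: "continuous_on {a..b} (\<lambda>s. f s (y s))" and y: "y = picard_map f a b \<tau> y0 y"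
    using picard_fixed_point[OF assms] by blast
  show thesis
  proof (rule that)
    show "y \<tau> = y0" using \<tau> by (subst y) (simp add: picard_map_def clamped_integral_eq)
    fix t assume "t \<in> {a<..<b}"
    then show "(y has_vector_derivative f t (y t)) (at t)"
      by (subst (1) y, unfold picard_map_def) (rule has_vector_derivative_clamped_integral[OF cont])
  qed
qed

end

section \<open>The equation as a first-order system\<close>

text \<open>The equation of \<^const>\<open>pos_sol\<close> solved for \<open>\<phi>''\<close>.\<close>

definition ode_rhs :: "nat \<Rightarrow> real \<Rightarrow> real \<Rightarrow> real \<Rightarrow> real" where
  "ode_rhs N x y p = - ((real N + 1) / x - x / 2) * p + y - y * (x * p + real N * y)"

definition ode_sys :: "nat \<Rightarrow> (real \<Rightarrow> real) \<Rightarrow> (real \<Rightarrow> real) \<Rightarrow> real \<Rightarrow> bool" where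
  "ode_sys N y p x \<longleftrightarrow>
     (y has_real_derivative p x) (at x) \<and> (p has_real_derivative ode_rhs N x (y x) (p x)) (at x)"

lemma pos_solD:
  assumes "pos_sol N u l" "l < x"
  shows "ode_sys N u (deriv u) x" "0 < u x" "(u has_real_derivative deriv u x) (at x)"
proof -
  have "u differentiable (at x)" "deriv u differentiable (at x)"
    and eq: "deriv (deriv u) x = ode_rhs N x (u x) (deriv u x)"
    using assms unfolding pos_sol_def ode_rhs_def by (auto simp: algebra_simps)
  then show "ode_sys N u (deriv u) x"
    unfolding ode_sys_def by (metis DERIV_deriv_iff_real_differentiable)
  then show "(u has_real_derivative deriv u x) (at x)" by (simp add: ode_sys_def)
  show "0 < u x" using assms unfolding pos_sol_def by blast
qed

lemma pos_solI:
  assumes sys: "\<And>x. l < x \<Longrightarrow> ode_sys N y p x" and pos: "\<And>x. l < x \<Longrightarrow> 0 < y x"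
  shows "pos_sol N y l"
  unfolding pos_sol_def
proof (intro allI impI conjI)
  fix x assume x: "l < x"
  have dy: "deriv y z = p z" if "l < z" for z
    using sys[OF that] by (simp add: ode_sys_def DERIV_imp_deriv)
  have "(deriv y has_real_derivative ode_rhs N x (y x) (p x)) (at x)"
    by (rule has_field_derivative_transform_within_open[of p _ _ "{l<..}"])
       (use sys[OF x] x dy in \<open>auto simp: ode_sys_def\<close>)
  then have "deriv (deriv y) x = ode_rhs N x (y x) (p x)" "deriv y differentiable (at x)"
    by (auto simp: DERIV_imp_deriv real_differentiable_def)
  then show "deriv y differentiable (at x)"
    and "deriv (deriv y) x + ((real N + 1) / x - x / 2) * deriv y x - y x
           + y x * (x * deriv y x + real N * y x) = 0"
    using dy[OF x] by (auto simp: ode_rhs_def algebra_simps)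
  show "y differentiable (at x)" using sys[OF x] by (auto simp: ode_sys_def real_differentiable_def)
  show "0 < y x" using pos[OF x] .
qed

lemma ode_sys_cong:
  assumes "ode_sys N y p x" "open S" "x \<in> S" "\<And>z. z \<in> S \<Longrightarrow> y z = y' z \<and> p z = p' z"
  shows "ode_sys N y' p' x"
proof -
  have "y x = y' x" "p x = p' x" using assms by auto
  then show ?thesis
    using assms unfolding ode_sys_def by (metis has_field_derivative_transform_within_open)
qed

lemma ode_sys_glue:
  assumes sys1: "\<And>x. x \<in> {a<..<r} \<Longrightarrow> ode_sys N y p x" and sys2: "\<And>x. l < x \<Longrightarrow> ode_sys N u q x"
    and agree: "\<And>x. x \<in> {l<..<r} \<Longrightarrow> y x = u x \<and> p x = q x" and "l < r" "a < x"
  shows "ode_sys N (\<lambda>x. if x \<le> l then y x else u x) (\<lambda>x. if x \<le> l then p x else q x) x"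
proof (cases "x < r")
  case True
  show ?thesis
    by (rule ode_sys_cong[OF sys1, of x "{a<..<r}"]) (use assms True agree in auto)
next
  case False
  show ?thesis
    by (rule ode_sys_cong[OF sys2, of x "{l<..}"]) (use assms False in auto)
qed

lemma ode_rhs_diff:
  "x \<noteq> 0 \<Longrightarrow> ode_rhs N x y p - ode_rhs N x y' p' =
     (- ((real N + 1) / x - x / 2) - x * y) * (p - p') + (1 - x * p' - real N * (y + y')) * (y - y')"
  unfolding ode_rhs_def by (simp add: field_simps)

text \<open>The derivative of the energy \<open>a\<^sup>2 + b\<^sup>2\<close> of the difference of two solutions,
  where \<open>a' = b\<close> and \<open>b' = k1 b + k2 a\<close>.\<close>

lemma abs_energy_deriv_le:
  fixes a b k1 k2 K :: real
  assumes "\<bar>k1\<bar> \<le> K" "\<bar>k2\<bar> \<le> K"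
  shows "\<bar>2 * a * b + 2 * b * (k1 * b + k2 * a)\<bar> \<le> (1 + 3 * K) * (a\<^sup>2 + b\<^sup>2)"
proof -
  have ab: "\<bar>2 * a * b\<bar> \<le> a\<^sup>2 + b\<^sup>2"
    using sum_squares_bound[of "\<bar>a\<bar>" "\<bar>b\<bar>"] by (simp add: abs_mult power2_eq_square)
  have "\<bar>2 * b * (k1 * b)\<bar> = 2 * \<bar>k1\<bar> * b\<^sup>2" by (simp add: abs_mult power2_eq_square)
  also have "\<dots> \<le> 2 * K * (a\<^sup>2 + b\<^sup>2)"
    using assms by (intro mult_mono) auto
  finally have "\<bar>2 * b * (k1 * b)\<bar> \<le> 2 * K * (a\<^sup>2 + b\<^sup>2)" .
  moreover have "\<bar>2 * b * (k2 * a)\<bar> = \<bar>k2\<bar> * \<bar>2 * a * b\<bar>" by (simp add: abs_mult)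
  then have "\<bar>2 * b * (k2 * a)\<bar> \<le> K * (a\<^sup>2 + b\<^sup>2)"
    using ab assms by (simp add: mult_mono)
  ultimately show ?thesis using ab by (simp add: algebra_simps)
qed

lemma ode_sys_unique_Icc:
  assumes "0 < c"
    and sys1: "\<And>x. x \<in> {c..d} \<Longrightarrow> ode_sys N y1 p1 x"
    and sys2: "\<And>x. x \<in> {c..d} \<Longrightarrow> ode_sys N y2 p2 x"
    and t: "t \<in> {c..d}" "y1 t = y2 t" "p1 t = p2 t"
    and x: "x \<in> {c..d}"
  shows "y1 x = y2 x \<and> p1 x = p2 x"
proof -
  have cont: "continuous_on {c..d} y1" "continuous_on {c..d} p1"
    "continuous_on {c..d} y2" "continuous_on {c..d} p2"
    using sys1 sys2 unfolding ode_sys_def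
    by (meson DERIV_isCont continuous_at_imp_continuous_on)+
  define k1 where "k1 z = - ((real N + 1) / z - z / 2) - z * y1 z" for z
  define k2 where "k2 z = 1 - z * p2 z - real N * (y1 z + y2 z)" for z
  have "continuous_on {c..d} k1" "continuous_on {c..d} k2"
    unfolding k1_def k2_def using \<open>0 < c\<close> by (auto intro!: continuous_intros cont)
  then obtain K1 K2 where K1: "\<And>z. z \<in> {c..d} \<Longrightarrow> \<bar>k1 z\<bar> \<le> K1"
    and K2: "\<And>z. z \<in> {c..d} \<Longrightarrow> \<bar>k2 z\<bar> \<le> K2"
    by (metis bounded_on_Icc)
  define E where "E z = (y1 z - y2 z)\<^sup>2 + (p1 z - p2 z)\<^sup>2" for z
  define E' where "E' z = 2 * (y1 z - y2 z) * (p1 z - p2 z)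
    + 2 * (p1 z - p2 z) * (k1 z * (p1 z - p2 z) + k2 z * (y1 z - y2 z))" for z
  have "E x = 0"
  proof (rule gronwall_vanishing[where E = E and E' = E' and K = "1 + 3 * max K1 K2" and t = t])
    fix z assume z: "z \<in> {c..d}"
    have "ode_rhs N z (y1 z) (p1 z) - ode_rhs N z (y2 z) (p2 z)
        = k1 z * (p1 z - p2 z) + k2 z * (y1 z - y2 z)"
      unfolding k1_def k2_def using z \<open>0 < c\<close> by (subst ode_rhs_diff) auto
    moreover have "(E has_real_derivative 2 * (y1 z - y2 z) * (p1 z - p2 z)
        + 2 * (p1 z - p2 z) * (ode_rhs N z (y1 z) (p1 z) - ode_rhs N z (y2 z) (p2 z))) (at z)"
      using sys1[OF z] sys2[OF z] unfolding E_def ode_sys_def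
      by (auto intro!: derivative_eq_intros simp: algebra_simps)
    ultimately show "(E has_real_derivative E' z) (at z)" by (simp add: E'_def)
    show "\<bar>E' z\<bar> \<le> (1 + 3 * max K1 K2) * E z"
      unfolding E'_def E_def using K1[OF z] K2[OF z] by (intro abs_energy_deriv_le) auto
  qed (use t x in \<open>auto simp: E_def\<close>)
  then show ?thesis by (simp add: E_def add_nonneg_eq_0_iff)
qed

lemma ode_sys_unique:
  assumes "0 \<le> l"
    and sys1: "\<And>x. x \<in> {l<..<r} \<Longrightarrow> ode_sys N y1 p1 x"
    and sys2: "\<And>x. x \<in> {l<..<r} \<Longrightarrow> ode_sys N y2 p2 x"
    and t: "t \<in> {l<..<r}" "y1 t = y2 t" "p1 t = p2 t"
    and x: "x \<in> {l<..<r}"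
  shows "y1 x = y2 x \<and> p1 x = p2 x"
proof -
  have "{min x t..max x t} \<subseteq> {l<..<r}" using t x by auto
  then have "ode_sys N y1 p1 z" "ode_sys N y2 p2 z" if "z \<in> {min x t..max x t}" for z
    using that sys1 sys2 by blast+
  moreover have "0 < min x t" using assms by auto
  ultimately show ?thesis
    using ode_sys_unique_Icc[of "min x t" "max x t" N y1 p1 y2 p2 t x] t by simp
qed

definition ode_field :: "nat \<Rightarrow> real \<Rightarrow> real \<times> real \<Rightarrow> real \<times> real" where
  "ode_field N t Y = (snd Y, ode_rhs N t (fst Y) (snd Y))"

lemma ode_field_continuous:
  "0 < c \<Longrightarrow> continuous_on ({c..X} \<times> S) (\<lambda>(t, Y). ode_field N t Y)"
  unfolding ode_field_def ode_rhs_def case_prod_unfold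
  by (intro continuous_intros) auto

lemma ode_field_bounded:
  assumes "0 < c"
  obtains M where "\<And>t Y. t \<in> {c..X} \<Longrightarrow> Y \<in> cball 0 R \<Longrightarrow> norm (ode_field N t Y) \<le> M"
proof -
  have "compact ((\<lambda>(t, Y). ode_field N t Y) ` ({c..X} \<times> cball 0 R))"
    using assms by (intro compact_continuous_image ode_field_continuous compact_Times) auto
  then obtain M where "\<forall>Z \<in> (\<lambda>(t, Y). ode_field N t Y) ` ({c..X} \<times> cball 0 R). norm Z \<le> M"
    using compact_imp_bounded bounded_iff by metis
  then show thesis using that by force
qed

lemma ode_field_lipschitz:
  assumes "0 < c"
  obtains K where "0 \<le> K"
    "\<And>t Y Z. t \<in> {c..X} \<Longrightarrow> Y \<in> cball 0 R \<Longrightarrow> Z \<in> cball 0 R \<Longrightarrow>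
      norm (ode_field N t Y - ode_field N t Z) \<le> K * norm (Y - Z)"
proof -
  define k1 where "k1 t Y = - ((real N + 1) / t - t / 2) - t * fst Y" for t and Y :: "real \<times> real"
  define k2 where "k2 t Y Z = 1 - t * snd Z - real N * (fst Y + fst Z)" for t and Y Z :: "real \<times> real"
  define q where "q z = \<bar>k1 (fst z) (fst (snd z))\<bar> + \<bar>k2 (fst z) (fst (snd z)) (snd (snd z))\<bar>"
    for z :: "real \<times> (real \<times> real) \<times> (real \<times> real)"
  have "compact (q ` ({c..X} \<times> (cball 0 R \<times> cball 0 R)))"
    unfolding q_def k1_def k2_def using assms
    by (intro compact_continuous_image compact_Times compact_cball compact_Icc continuous_intros) auto
  then obtain K0 where K0: "\<forall>w \<in> q ` ({c..X} \<times> (cball 0 R \<times> cball 0 R)). norm w \<le> K0"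
    using compact_imp_bounded bounded_iff by metis
  show thesis
  proof (rule that[of "1 + \<bar>K0\<bar>"])
    fix t and Y Z :: "real \<times> real"
    assume t: "t \<in> {c..X}" and YZ: "Y \<in> cball 0 R" "Z \<in> cball 0 R"
    have q: "\<bar>k1 t Y\<bar> + \<bar>k2 t Y Z\<bar> \<le> \<bar>K0\<bar>"
      using K0 t YZ unfolding q_def by force
    have "(fst Y - fst Z, snd Y - snd Z) = Y - Z" by (simp add: prod_eq_iff)
    then have comp: "\<bar>fst Y - fst Z\<bar> \<le> norm (Y - Z)" "\<bar>snd Y - snd Z\<bar> \<le> norm (Y - Z)"
      using norm_fst_le[of "fst Y - fst Z" "snd Y - snd Z"] norm_snd_le[of "snd Y - snd Z" "fst Y - fst Z"]
      by auto
    have "ode_field N t Y - ode_field N t Z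
        = (snd Y - snd Z, k1 t Y * (snd Y - snd Z) + k2 t Y Z * (fst Y - fst Z))"
      using t assms ode_rhs_diff[of t N "fst Y" "snd Y" "fst Z" "snd Z"]
      by (simp add: ode_field_def k1_def k2_def)
    then have "norm (ode_field N t Y - ode_field N t Z)
        \<le> \<bar>snd Y - snd Z\<bar> + \<bar>k1 t Y\<bar> * \<bar>snd Y - snd Z\<bar> + \<bar>k2 t Y Z\<bar> * \<bar>fst Y - fst Z\<bar>"
      using norm_Pair_le[of "snd Y - snd Z" "k1 t Y * (snd Y - snd Z) + k2 t Y Z * (fst Y - fst Z)"]
        abs_triangle_ineq[of "k1 t Y * (snd Y - snd Z)" "k2 t Y Z * (fst Y - fst Z)"]
      by (simp add: abs_mult)
    also have "\<dots> \<le> norm (Y - Z) + \<bar>k1 t Y\<bar> * norm (Y - Z) + \<bar>k2 t Y Z\<bar> * norm (Y - Z)"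
      using comp by (intro add_mono mult_left_mono) auto
    also have "\<dots> \<le> (1 + \<bar>K0\<bar>) * norm (Y - Z)"
      using mult_right_mono[OF q norm_ge_zero[of "Y - Z"]] by (simp add: algebra_simps)
    finally show "norm (ode_field N t Y - ode_field N t Z) \<le> (1 + \<bar>K0\<bar>) * norm (Y - Z)" .
  qed simp
qed

lemma ode_sys_local_existence:
  assumes "0 < c"
  obtains r where "0 < r"
    "\<And>\<rho> \<xi>0 Y0. 0 < \<rho> \<Longrightarrow> \<rho> \<le> r \<Longrightarrow> c \<le> \<xi>0 - \<rho> \<Longrightarrow> \<xi>0 + \<rho> \<le> X \<Longrightarrow> norm Y0 \<le> B \<Longrightarrow>
      \<exists>y p. (y \<xi>0, p \<xi>0) = Y0 \<and> (\<forall>x\<in>{\<xi>0 - \<rho><..<\<xi>0 + \<rho>}. ode_sys N y p x)"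
proof -
  obtain M where M: "\<And>t Y. t \<in> {c..X} \<Longrightarrow> Y \<in> cball 0 (B + 1) \<Longrightarrow> norm (ode_field N t Y) \<le> M"
    using ode_field_bounded[OF assms] by blast
  obtain K where K: "0 \<le> K" "\<And>t Y Z. t \<in> {c..X} \<Longrightarrow> Y \<in> cball 0 (B + 1) \<Longrightarrow> Z \<in> cball 0 (B + 1) \<Longrightarrow>
      norm (ode_field N t Y - ode_field N t Z) \<le> K * norm (Y - Z)"
    using ode_field_lipschitz[OF assms] by blast
  define r where "r = 1 / (2 * (\<bar>M\<bar> + K + 1))"
  have "0 < \<bar>M\<bar> + K + 1" using K(1) by simp
  then have r: "0 < r" "\<bar>M\<bar> * (2 * r) \<le> 1" "K * (2 * r) < 1"
    using K(1) by (simp_all add: r_def field_simps)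
  show thesis
  proof (rule that[OF r(1)])
    fix \<rho> \<xi>0 and Y0 :: "real \<times> real"
    assume \<rho>: "0 < \<rho>" "\<rho> \<le> r" and \<xi>0: "c \<le> \<xi>0 - \<rho>" "\<xi>0 + \<rho> \<le> X" and "norm Y0 \<le> B"
    have ball: "cball Y0 1 \<subseteq> cball 0 (B + 1)"
      using \<open>norm Y0 \<le> B\<close> by (subst cball_subset_cball_iff) (simp add: dist_norm)
    have interval: "{\<xi>0 - \<rho>..\<xi>0 + \<rho>} \<subseteq> {c..X}" using \<xi>0 by auto
    have "\<bar>M\<bar> * (2 * \<rho>) \<le> \<bar>M\<bar> * (2 * r)" "K * (2 * \<rho>) \<le> K * (2 * r)"
      using \<rho> K(1) by (intro mult_left_mono; simp)+
    then have small: "\<bar>M\<bar> * (2 * \<rho>) \<le> 1" "K * (2 * \<rho>) < 1"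
      using r(2,3) by linarith+
    obtain Y where Y: "Y \<xi>0 = Y0"
      "\<And>t. t \<in> {\<xi>0 - \<rho><..<\<xi>0 + \<rho>} \<Longrightarrow> (Y has_vector_derivative ode_field N t (Y t)) (at t)"
    proof (rule picard_local_existence[where f = "ode_field N" and R = 1 and M = "\<bar>M\<bar>" and K = K
          and \<tau> = \<xi>0])
      show "continuous_on ({\<xi>0 - \<rho>..\<xi>0 + \<rho>} \<times> cball Y0 1) (\<lambda>(t, Y). ode_field N t Y)"
        by (rule continuous_on_subset[OF ode_field_continuous[OF assms]]) (use interval in auto)
      show "norm (ode_field N t Y) \<le> \<bar>M\<bar>"
        if "t \<in> {\<xi>0 - \<rho>..\<xi>0 + \<rho>}" "Y \<in> cball Y0 1" for t Y
        using M[of t Y] that interval ball by fastforce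
      show "norm (ode_field N t Y - ode_field N t Z) \<le> K * norm (Y - Z)"
        if "t \<in> {\<xi>0 - \<rho>..\<xi>0 + \<rho>}" "Y \<in> cball Y0 1" "Z \<in> cball Y0 1" for t Y Z
        using K(2)[of t Y Z] that interval ball by blast
    qed (use small \<rho> K(1) in auto)
    show "\<exists>y p. (y \<xi>0, p \<xi>0) = Y0 \<and> (\<forall>x\<in>{\<xi>0 - \<rho><..<\<xi>0 + \<rho>}. ode_sys N y p x)"
    proof (intro exI conjI ballI)
      show "((\<lambda>t. fst (Y t)) \<xi>0, (\<lambda>t. snd (Y t)) \<xi>0) = Y0" using Y(1) by simp
      fix x assume "x \<in> {\<xi>0 - \<rho><..<\<xi>0 + \<rho>}"
      then show "ode_sys N (\<lambda>t. fst (Y t)) (\<lambda>t. snd (Y t)) x"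
        using has_vector_derivative_fst_snd[OF Y(2)[unfolded ode_field_def]] by (simp add: ode_sys_def)
    qed
  qed
qed

section \<open>The maximal extension\<close>

lemma pos_sols_agree:
  assumes sol1: "pos_sol N \<psi>1 l1" and sol2: "pos_sol N \<psi>2 l2" and "0 \<le> l1" "0 \<le> l2"
    and tail: "\<And>\<xi>. L < \<xi> \<Longrightarrow> \<psi>1 \<xi> = \<psi>2 \<xi>"
    and x: "max l1 l2 < x"
  shows "\<psi>1 x = \<psi>2 x"
proof -
  define t where "t = max (max l1 l2) L + 1"
  have "\<forall>\<^sub>F \<xi> in nhds t. \<psi>1 \<xi> = \<psi>2 \<xi>"
    unfolding eventually_nhds by (intro exI[of _ "{L<..}"]) (auto simp: t_def tail)
  then have "deriv \<psi>1 t = deriv \<psi>2 t" by (rule deriv_cong_ev) simp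
  moreover have "\<psi>1 t = \<psi>2 t" by (simp add: t_def tail)
  moreover have "t \<in> {max l1 l2<..<max x t + 1}" "x \<in> {max l1 l2<..<max x t + 1}"
    using x by (auto simp: t_def)
  moreover have "ode_sys N \<psi>1 (deriv \<psi>1) z" "ode_sys N \<psi>2 (deriv \<psi>2) z" if "max l1 l2 < z" for z
    using pos_solD(1)[OF sol1] pos_solD(1)[OF sol2] that by auto
  ultimately show ?thesis
    using ode_sys_unique[of "max l1 l2" "max x t + 1" N \<psi>1 "deriv \<psi>1" \<psi>2 "deriv \<psi>2" t x]
      \<open>0 \<le> l1\<close> by auto
qed

lemma pos_sol_glue:
  assumes "l0 \<in> S" "bdd_below S" and sols: "\<And>l. l \<in> S \<Longrightarrow> pos_sol N (W l) l"
    and agree: "\<And>l l' x. l \<in> S \<Longrightarrow> l' \<in> S \<Longrightarrow> max l l' < x \<Longrightarrow> W l x = W l' x"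
  obtains \<Psi> where "pos_sol N \<Psi> (Inf S)" "\<And>l x. l \<in> S \<Longrightarrow> l < x \<Longrightarrow> \<Psi> x = W l x"
proof -
  have below: "\<exists>l\<in>S. l < \<xi>" if "Inf S < \<xi>" for \<xi>
    using that assms(1,2) by (subst (asm) cInf_less_iff) auto
  define L where "L \<xi> = (SOME l. l \<in> S \<and> l < \<xi>)" for \<xi>
  have L: "L \<xi> \<in> S" "L \<xi> < \<xi>" if "Inf S < \<xi>" for \<xi>
    using someI_ex[OF below[OF that, unfolded Bex_def]] unfolding L_def by auto
  define \<Psi> where "\<Psi> \<xi> = W (L \<xi>) \<xi>" for \<xi>
  have \<Psi>_eq: "\<Psi> \<xi> = W l \<xi>" if "l \<in> S" "l < \<xi>" for l \<xi>
  proof -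
    have "Inf S < \<xi>" using cInf_lower[OF that(1) assms(2)] that(2) by simp
    then show ?thesis unfolding \<Psi>_def using agree[OF L(1) that(1), of \<xi>] L(2) that(2) by simp
  qed
  have "pos_sol N \<Psi> (Inf S)"
  proof (rule pos_solI)
    fix x assume "Inf S < x"
    then obtain l where l: "l \<in> S" "l < x" using below by blast
    have "deriv (W l) z = deriv \<Psi> z" if "l < z" for z
    proof (rule deriv_cong_ev)
      show "\<forall>\<^sub>F \<xi> in nhds z. W l \<xi> = \<Psi> \<xi>"
        unfolding eventually_nhds using that l by (intro exI[of _ "{l<..}"]) (auto simp: \<Psi>_eq)
    qed simp
    then show "ode_sys N \<Psi> (deriv \<Psi>) x"
      by (intro ode_sys_cong[OF pos_solD(1)[OF sols[OF l(1)] l(2)], of "{l<..}"])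
         (use l \<Psi>_eq in auto)
    show "0 < \<Psi> x" using pos_solD(2)[OF sols[OF l(1)] l(2)] \<Psi>_eq[OF l] by simp
  qed
  then show thesis using that \<Psi>_eq by blast
qed

definition ext_levels :: "nat \<Rightarrow> (real \<Rightarrow> real) \<Rightarrow> real \<Rightarrow> real set" where
  "ext_levels N \<phi> l0 = {l. 0 < l \<and> (\<exists>\<psi>. pos_sol N \<psi> l \<and> (\<forall>\<xi>>max l l0. \<psi> \<xi> = \<phi> \<xi>))}"

lemma ext_inf_eq_Inf: "ext_inf N \<phi> l0 = Inf (ext_levels N \<phi> l0)"
  unfolding ext_inf_def ext_levels_def ..

lemma bdd_below_ext_levels: "bdd_below (ext_levels N \<phi> l0)"
  unfolding ext_levels_def bdd_below_def by (auto intro: less_imp_le)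

lemma ext_inf_le: "l \<in> ext_levels N \<phi> l0 \<Longrightarrow> ext_inf N \<phi> l0 \<le> l"
  unfolding ext_inf_eq_Inf by (rule cInf_lower[OF _ bdd_below_ext_levels])

lemma in_ext_levels: "0 < l0 \<Longrightarrow> pos_sol N \<phi> l0 \<Longrightarrow> l0 \<in> ext_levels N \<phi> l0"
  unfolding ext_levels_def by auto

lemma ext_inf_nonneg: "0 < l0 \<Longrightarrow> pos_sol N \<phi> l0 \<Longrightarrow> 0 \<le> ext_inf N \<phi> l0"
  unfolding ext_inf_eq_Inf
  using in_ext_levels[of l0 N \<phi>] by (intro cInf_greatest) (auto simp: ext_levels_def)

lemma ext_inf_solution:
  assumes "0 < l0" "pos_sol N \<phi> l0"
  obtains \<Psi> where "pos_sol N \<Psi> (ext_inf N \<phi> l0)" "\<And>\<xi>. l0 < \<xi> \<Longrightarrow> \<Psi> \<xi> = \<phi> \<xi>"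
proof -
  let ?S = "ext_levels N \<phi> l0"
  define W where "W l = (SOME \<psi>. pos_sol N \<psi> l \<and> (\<forall>\<xi>>max l l0. \<psi> \<xi> = \<phi> \<xi>))" for l
  have W: "pos_sol N (W l) l" "\<And>\<xi>. max l l0 < \<xi> \<Longrightarrow> W l \<xi> = \<phi> \<xi>" if "l \<in> ?S" for l
    using someI_ex[of "\<lambda>\<psi>. pos_sol N \<psi> l \<and> (\<forall>\<xi>>max l l0. \<psi> \<xi> = \<phi> \<xi>)"] that
    unfolding W_def ext_levels_def by auto
  have agree: "W l x = W l' x" if l: "l \<in> ?S" "l' \<in> ?S" and "max l l' < x" for l l' x
  proof (rule pos_sols_agree[OF W(1)[OF l(1)] W(1)[OF l(2)]])
    show "W l z = W l' z" if "max (max l l') l0 < z" for z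
      using W(2)[OF l(1), of z] W(2)[OF l(2), of z] that by simp
  qed (use that in \<open>auto simp: ext_levels_def\<close>)
  obtain \<Psi> where \<Psi>: "pos_sol N \<Psi> (Inf ?S)" and \<Psi>_eq: "\<And>l x. l \<in> ?S \<Longrightarrow> l < x \<Longrightarrow> \<Psi> x = W l x"
    using pos_sol_glue[OF in_ext_levels[OF assms] bdd_below_ext_levels W(1) agree] by blast
  show thesis
  proof (rule that)
    show "pos_sol N \<Psi> (ext_inf N \<phi> l0)" using \<Psi> by (simp add: ext_inf_eq_Inf)
    show "\<Psi> \<xi> = \<phi> \<xi>" if "l0 < \<xi>" for \<xi>
      using \<Psi>_eq[OF in_ext_levels[OF assms] that] W(2)[OF in_ext_levels[OF assms], of \<xi>] that by simp
  qed
qed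

section \<open>The Lyapunov function\<close>

definition lyapunov :: "nat \<Rightarrow> (real \<Rightarrow> real) \<Rightarrow> real \<Rightarrow> real" where
  "lyapunov N u \<xi> = \<xi> ^ (N + 1) * (deriv u \<xi> + \<xi> * u \<xi> * (u \<xi> - 1) / 2)"

definition lyapunov_rate :: "nat \<Rightarrow> real \<Rightarrow> real" where
  "lyapunov_rate N v = real N / 2 * v + (real N / 2 - 1) * v\<^sup>2"

lemma lyapunov_rate_nonneg: "2 \<le> N \<Longrightarrow> 0 \<le> v \<Longrightarrow> 0 \<le> lyapunov_rate N v"
  unfolding lyapunov_rate_def by simp

lemma lyapunov_rate_mono: "2 \<le> N \<Longrightarrow> 0 \<le> v \<Longrightarrow> v \<le> w \<Longrightarrow> lyapunov_rate N v \<le> lyapunov_rate N w"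
  unfolding lyapunov_rate_def by (intro add_mono mult_left_mono power_mono) auto

lemma has_real_derivative_lyapunov:
  assumes sys: "ode_sys N u (deriv u) x" and "x \<noteq> 0"
  shows "(lyapunov N u has_real_derivative - (x ^ (N + 1) * lyapunov_rate N (u x))) (at x)"
proof -
  have "((\<lambda>\<xi>. \<xi> ^ (N + 1)) has_real_derivative real (N + 1) * x ^ N) (at x)"
    using DERIV_pow[of "N + 1" x] by simp
  moreover have "((\<lambda>\<xi>. deriv u \<xi> + \<xi> * u \<xi> * (u \<xi> - 1) / 2) has_real_derivative
      ode_rhs N x (u x) (deriv u x) + (u x * (u x - 1) + x * deriv u x * (2 * u x - 1)) / 2) (at x)"
    using sys unfolding ode_sys_def by (auto intro!: derivative_eq_intros simp: field_simps)
  ultimately have "(lyapunov N u has_real_derivative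
      real (N + 1) * x ^ N * (deriv u x + x * u x * (u x - 1) / 2)
      + (ode_rhs N x (u x) (deriv u x) + (u x * (u x - 1) + x * deriv u x * (2 * u x - 1)) / 2)
        * x ^ (N + 1)) (at x)"
    unfolding lyapunov_def[abs_def] by (rule DERIV_mult)
  moreover have "real (N + 1) * x ^ N * (deriv u x + x * u x * (u x - 1) / 2)
      + (ode_rhs N x (u x) (deriv u x) + (u x * (u x - 1) + x * deriv u x * (2 * u x - 1)) / 2)
        * x ^ (N + 1)
      = - (x ^ (N + 1) * lyapunov_rate N (u x))"
    using assms(2) unfolding ode_rhs_def lyapunov_rate_def
    by (simp add: field_simps power2_eq_square)
  ultimately show ?thesis by simp
qed

lemma lyapunov_antimono:
  assumes sol: "pos_sol N u l" and "0 \<le> l" "2 \<le> N" "l < s" "s \<le> t"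
  shows "lyapunov N u t \<le> lyapunov N u s"
proof (rule DERIV_nonpos_imp_nonincreasing[OF \<open>s \<le> t\<close>])
  fix x assume "s \<le> x" "x \<le> t"
  then have x: "l < x" "0 < x" using assms by auto
  then have "0 \<le> x ^ (N + 1) * lyapunov_rate N (u x)"
    using pos_solD(2)[OF sol] assms by (simp add: lyapunov_rate_nonneg less_imp_le)
  then show "\<exists>D. (lyapunov N u has_real_derivative D) (at x) \<and> D \<le> 0"
    using has_real_derivative_lyapunov[OF pos_solD(1)[OF sol x(1)]] x by auto
qed

lemma lyapunov_growth_bound:
  assumes sol: "pos_sol N u l" and "0 \<le> l" "2 \<le> N" "l < s" "s \<le> t"
    and bound: "\<And>x. l < x \<Longrightarrow> u x \<le> B"
  shows "lyapunov N u s + lyapunov_rate N B * s ^ (N + 2) / real (N + 2)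
    \<le> lyapunov N u t + lyapunov_rate N B * t ^ (N + 2) / real (N + 2)"
proof (rule DERIV_nonneg_imp_nondecreasing[OF \<open>s \<le> t\<close>])
  fix x assume "s \<le> x" "x \<le> t"
  then have x: "l < x" "0 < x" using assms by auto
  have "lyapunov_rate N (u x) \<le> lyapunov_rate N B"
    using pos_solD(2)[OF sol x(1)] bound[OF x(1)] assms by (intro lyapunov_rate_mono) auto
  then have "0 \<le> - (x ^ (N + 1) * lyapunov_rate N (u x)) + lyapunov_rate N B * x ^ (N + 1)"
    using x by (simp add: algebra_simps mult_left_mono)
  moreover have dpow: "((\<lambda>x. x ^ (N + 2)) has_real_derivative real (N + 2) * x ^ (N + 1)) (at x)"
    using DERIV_pow[of "N + 2" x] by simp
  have "((\<lambda>x. lyapunov_rate N B * x ^ (N + 2) / real (N + 2))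
      has_real_derivative lyapunov_rate N B * x ^ (N + 1)) (at x)"
    using DERIV_cdivide[OF DERIV_cmult[OF dpow, of "lyapunov_rate N B"], of "real (N + 2)"]
    by simp
  then have "((\<lambda>x. lyapunov N u x + lyapunov_rate N B * x ^ (N + 2) / real (N + 2))
      has_real_derivative - (x ^ (N + 1) * lyapunov_rate N (u x)) + lyapunov_rate N B * x ^ (N + 1))
      (at x)"
    using has_real_derivative_lyapunov[OF pos_solD(1)[OF sol x(1)]] x by (intro DERIV_add) auto
  ultimately show "\<exists>D. ((\<lambda>x. lyapunov N u x + lyapunov_rate N B * x ^ (N + 2) / real (N + 2))
      has_real_derivative D) (at x) \<and> 0 \<le> D"
    by blast
qed

lemma deriv_eq_lyapunov:
  "0 < x \<Longrightarrow> deriv u x = lyapunov N u x / x ^ (N + 1) - x * u x * (u x - 1) / 2"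
  unfolding lyapunov_def by simp

lemma lyapunov_at_critical:
  "deriv u x = 0 \<Longrightarrow> lyapunov N u x = x ^ (N + 2) * (u x * (u x - 1)) / 2"
  unfolding lyapunov_def by (simp add: algebra_simps)

lemma abs_mult_diff_one_le:
  fixes v B :: real
  assumes "0 < v" "v \<le> B"
  shows "\<bar>v * (v - 1)\<bar> \<le> B\<^sup>2 + 1"
proof (cases "v \<le> 1")
  case True
  then have "- 1 \<le> v * (v - 1)" "v * (v - 1) \<le> 0"
    using mult_le_one[of v "1 - v"] mult_nonneg_nonpos[of v "v - 1"] assms(1)
    by (auto simp: algebra_simps)
  moreover have "0 \<le> B\<^sup>2" by simp
  ultimately show ?thesis unfolding abs_le_iff by linarith
next
  case False
  then have "v * (v - 1) \<le> B * B" using assms by (intro mult_mono) auto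
  then show ?thesis using False by (simp add: power2_eq_square abs_le_iff)
qed

lemma abs_deriv_sub_lyapunov_le:
  assumes "0 < x" "x \<le> X" "0 < u x" "u x \<le> B"
  shows "\<bar>deriv u x - lyapunov N u x / x ^ (N + 1)\<bar> \<le> X * (B\<^sup>2 + 1) / 2"
proof -
  have "deriv u x - lyapunov N u x / x ^ (N + 1) = - (x * (u x * (u x - 1)) / 2)"
    using deriv_eq_lyapunov[OF assms(1), of u N] by simp
  then have "\<bar>deriv u x - lyapunov N u x / x ^ (N + 1)\<bar> = x * \<bar>u x * (u x - 1)\<bar> / 2"
    using assms(1) by (simp add: abs_mult)
  also have "\<dots> \<le> X * (B\<^sup>2 + 1) / 2"
    using abs_mult_diff_one_le[OF assms(3,4)] assms(1,2) by (intro divide_right_mono mult_mono) auto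
  finally show ?thesis .
qed

section \<open>Unbounded solutions\<close>

lemma critical_values_decrease:
  assumes sol: "pos_sol N u l" and "0 \<le> l" "2 \<le> N" "l < n" "n < m"
    and crit: "deriv u n = 0" "deriv u m = 0" and "1 < u m"
  shows "u m < u n"
proof -
  have "lyapunov N u m \<le> lyapunov N u n"
    using lyapunov_antimono[OF sol] assms by simp
  then have "m ^ (N + 2) * (u m * (u m - 1)) \<le> n ^ (N + 2) * (u n * (u n - 1))"
    unfolding lyapunov_at_critical[OF crit(1)] lyapunov_at_critical[OF crit(2)] by simp
  moreover have "n ^ (N + 2) * (u m * (u m - 1)) < m ^ (N + 2) * (u m * (u m - 1))"
    using assms by (intro mult_strict_right_mono power_strict_mono) auto
  ultimately have "n ^ (N + 2) * (u m * (u m - 1)) < n ^ (N + 2) * (u n * (u n - 1))"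
    by linarith
  then have "u m * (u m - 1) < u n * (u n - 1)"
    using assms by (simp add: mult_less_cancel_left_pos)
  then have "0 < (u n - u m) * (u n + u m - 1)" by (simp add: algebra_simps)
  moreover have "0 < u n + u m - 1" using pos_solD(2)[OF sol \<open>l < n\<close>] \<open>1 < u m\<close> by simp
  ultimately show ?thesis by (simp add: zero_less_mult_iff)
qed

lemma unbounded_pos_sol_tendsto_infinity:
  assumes sol: "pos_sol N u l" and "0 \<le> l" "2 \<le> N"
    and unbounded: "\<not> bounded (u ` {l<..})"
    and tail: "\<And>b. l < b \<Longrightarrow> \<exists>K. \<forall>x\<ge>b. u x \<le> K"
  shows "filterlim u at_top (at_right l)"
proof -
  have high: "\<exists>y. l < y \<and> y < b \<and> M < u y" if "l < b" for b M
  proof (rule ccontr)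
    assume "\<not> ?thesis"
    then have "u y \<le> M" if "l < y" "y < b" for y using that by force
    moreover obtain K where "\<forall>x\<ge>b. u x \<le> K" using tail[OF \<open>l < b\<close>] by blast
    ultimately have "\<bar>u y\<bar> \<le> max M K" if "l < y" for y
      using pos_solD(2)[OF sol that] that by (cases "y < b") (auto simp: not_less le_max_iff_disj)
    then have "bounded (u ` {l<..})" by (auto simp: bounded_iff)
    then show False using unbounded by blast
  qed
  show ?thesis unfolding filterlim_at_top
  proof (rule allI, rule ccontr)
    fix Z assume "\<not> (\<forall>\<^sub>F x in at_right l. Z \<le> u x)"
    define M where "M = max Z 1"
    have low: "\<exists>y. l < y \<and> y < b \<and> u y < M" if "l < b" for b
      using \<open>\<not> (\<forall>\<^sub>F x in at_right l. Z \<le> u x)\<close> that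
      unfolding eventually_at_right_field M_def by force
    \<comment> \<open>alternate below and above the level \<open>M\<close> while approaching \<open>l\<close>\<close>
    obtain r where r: "l < r" "u r < M" using low[of "l + 1"] by auto
    obtain q where q: "l < q" "q < r" "M < u q" using high[OF r(1)] by auto
    obtain p where p: "l < p" "p < q" "u p < M" using low[OF q(1)] by auto
    obtain p' where p': "l < p'" "p' < p" "M < u p'" using high[OF p(1)] by auto
    have deriv: "(u has_real_derivative deriv u x) (at x)" if "l < x" for x
      using pos_solD(3)[OF sol that] .
    obtain n where n: "n \<in> {p'<..<q}" "deriv u n = 0" "u n \<le> u p"
      by (rule interior_min_critical[of p' q u "deriv u" p]) (use deriv p p' q in auto)
    obtain m where m: "m \<in> {n<..<r}" "deriv u m = 0" "u q \<le> u m"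
      by (rule interior_max_critical[of n r u "deriv u" q]) (use deriv n p p' q r in auto)
    have "u m < u n"
      by (rule critical_values_decrease[OF sol]) (use assms n m p p' q M_def in auto)
    then show False using n m p q by simp
  qed
qed

section \<open>Bounded solutions\<close>

lemma lyapunov_nonpos_at_zero:
  assumes sol: "pos_sol N u 0" and N: "2 \<le> N" and bound: "\<And>x. 0 < x \<Longrightarrow> u x \<le> B"
    and x: "0 < x"
  shows "lyapunov N u x \<le> 0"
proof (rule ccontr)
  assume "\<not> ?thesis"
  then have c: "0 < lyapunov N u x" by simp
  obtain s where "0 < s" "u s < 0"
  proof (rule deriv_above_pole_imp_unbounded_below
      [where f = u and f' = "deriv u" and c = "lyapunov N u x" and K = "x * (B\<^sup>2 + 1) / 2" and L = 0])
    fix z assume z: "0 < z" "z \<le> x"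
    show "(u has_real_derivative deriv u z) (at z)" using pos_solD(3)[OF sol z(1)] .
    have "lyapunov N u x \<le> lyapunov N u z" using lyapunov_antimono[OF sol _ N z] by simp
    then have "lyapunov N u x / z ^ (N + 1) \<le> lyapunov N u z / z ^ (N + 1)"
      using z(1) by (simp add: divide_right_mono)
    then show "lyapunov N u x / z ^ (N + 1) - x * (B\<^sup>2 + 1) / 2 \<le> deriv u z"
      using abs_deriv_sub_lyapunov_le[where u = u and N = N, OF z pos_solD(2)[OF sol z(1)] bound[OF z(1)]]
      unfolding abs_le_iff by linarith
  qed (use c x N in auto)
  then show False using pos_solD(2)[OF sol] by force
qed

lemma lyapunov_lower_bound_at_zero:
  assumes sol: "pos_sol N u 0" and N: "2 \<le> N" and bound: "\<And>x. 0 < x \<Longrightarrow> u x \<le> B"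
    and x: "0 < x"
  shows "- (lyapunov_rate N B * x ^ (N + 2) / real (N + 2)) \<le> lyapunov N u x"
proof (rule ccontr)
  let ?H = "\<lambda>z. lyapunov N u z + lyapunov_rate N B * z ^ (N + 2) / real (N + 2)"
  assume "\<not> ?thesis"
  then have c: "0 < - ?H x" by simp
  have B: "0 \<le> B" using bound[of 1] pos_solD(2)[OF sol, of 1] by simp
  obtain s where "0 < s" "- u s < - B"
  proof (rule deriv_above_pole_imp_unbounded_below
      [where f = "\<lambda>z. - u z" and f' = "\<lambda>z. - deriv u z" and c = "- ?H x" and K = "x * (B\<^sup>2 + 1) / 2"
        and L = "- B"])
    fix z assume z: "0 < z" "z \<le> x"
    show "((\<lambda>z. - u z) has_real_derivative - deriv u z) (at z)"
      using pos_solD(3)[OF sol z(1)] by (rule DERIV_minus)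
    have "?H z \<le> ?H x" using lyapunov_growth_bound[OF sol _ N z] bound by simp
    moreover have "0 \<le> lyapunov_rate N B * z ^ (N + 2) / real (N + 2)"
      using B N z(1) by (simp add: lyapunov_rate_nonneg)
    ultimately have "lyapunov N u z / z ^ (N + 1) \<le> ?H x / z ^ (N + 1)"
      using z(1) by (intro divide_right_mono) auto
    moreover have "- ?H x / z ^ (N + 1) = - (?H x / z ^ (N + 1))" by (rule minus_divide_left[symmetric])
    ultimately show "- ?H x / z ^ (N + 1) - x * (B\<^sup>2 + 1) / 2 \<le> - deriv u z"
      using abs_deriv_sub_lyapunov_le[where u = u and N = N, OF z pos_solD(2)[OF sol z(1)] bound[OF z(1)]]
      unfolding abs_le_iff by linarith
  qed (use c x N in auto)
  then show False using bound by force
qed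

lemma bounded_pos_sol_at_zero:
  assumes sol: "pos_sol N u 0" and N: "2 \<le> N" and bound: "\<And>x. 0 < x \<Longrightarrow> u x \<le> B"
  shows "\<exists>L. (u \<longlongrightarrow> L) (at_right 0)" "(deriv u \<longlongrightarrow> 0) (at_right 0)"
proof -
  define D where "D = lyapunov_rate N B / real (N + 2) + (B\<^sup>2 + 1) / 2"
  have B: "0 \<le> B" using bound[of 1] pos_solD(2)[OF sol, of 1] by simp
  have D: "0 \<le> D" unfolding D_def using B N by (simp add: lyapunov_rate_nonneg)
  have deriv_bound: "\<bar>deriv u x\<bar> \<le> x * D" if x: "0 < x" for x
  proof -
    have "\<bar>lyapunov N u x\<bar> / x ^ (N + 1) \<le> lyapunov_rate N B * x ^ (N + 2) / real (N + 2) / x ^ (N + 1)"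
      using lyapunov_nonpos_at_zero[OF sol N bound x] lyapunov_lower_bound_at_zero[OF sol N bound x] x
      by (intro divide_right_mono) auto
    also have "\<dots> = lyapunov_rate N B / real (N + 2) * (x ^ (N + 1) * x) / x ^ (N + 1)"
      by simp
    also have "\<dots> = lyapunov_rate N B / real (N + 2) * x" using x by simp
    finally have "\<bar>lyapunov N u x / x ^ (N + 1)\<bar> \<le> lyapunov_rate N B / real (N + 2) * x"
      using x by (simp add: abs_div)
    moreover have "x * D = lyapunov_rate N B / real (N + 2) * x + x * (B\<^sup>2 + 1) / 2"
      by (simp add: D_def algebra_simps)
    ultimately show ?thesis
      using abs_deriv_sub_lyapunov_le[where u = u and N = N, OF x order_refl pos_solD(2)[OF sol x] bound[OF x]]
      unfolding abs_le_iff by linarith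
  qed
  show "(deriv u \<longlongrightarrow> 0) (at_right 0)"
  proof (rule tendsto_0_le[where f = "\<lambda>x. x" and K = D])
    show "((\<lambda>x. x) \<longlongrightarrow> (0 :: real)) (at_right 0)" by (rule tendsto_ident_at)
    show "\<forall>\<^sub>F x in at_right 0. norm (deriv u x) \<le> norm x * D"
      unfolding eventually_at_right_field by (intro exI[of _ 1]) (auto simp: deriv_bound)
  qed
  obtain L where "(u \<longlongrightarrow> L) (at_right 0)"
  proof (rule deriv_bounded_imp_tendsto_at_right[where b = 1 and f' = "deriv u" and C = D])
    fix x :: real assume x: "x \<in> {0<..<1}"
    show "(u has_real_derivative deriv u x) (at x)" using pos_solD(3)[OF sol] x by simp
    show "\<bar>deriv u x\<bar> \<le> D" using deriv_bound[of x] x D mult_left_le_one_le[of D x] by simp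
  qed simp
  then show "\<exists>L. (u \<longlongrightarrow> L) (at_right 0)" by blast
qed

lemma bounded_pos_sol_deriv_bounded:
  assumes sol: "pos_sol N u l" and "0 < l" "2 \<le> N" and bound: "\<And>x. l < x \<Longrightarrow> u x \<le> B"
  obtains D where "\<And>x. l < x \<Longrightarrow> x \<le> l + 1 \<Longrightarrow> \<bar>deriv u x\<bar> \<le> D"
proof -
  let ?C = "lyapunov_rate N B"
  have B: "0 \<le> B" using bound[of "l + 1"] pos_solD(2)[OF sol, of "l + 1"] by simp
  define A where "A = \<bar>lyapunov N u (l + 1)\<bar> + ?C * (l + 1) ^ (N + 2) / real (N + 2)"
  have A: "0 \<le> A" using B \<open>0 < l\<close> \<open>2 \<le> N\<close> by (simp add: A_def lyapunov_rate_nonneg)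
  have "\<bar>deriv u x\<bar> \<le> A / l ^ (N + 1) + (l + 1) * (B\<^sup>2 + 1) / 2" if x: "l < x" "x \<le> l + 1" for x
  proof -
    have "lyapunov N u (l + 1) \<le> lyapunov N u x"
      using lyapunov_antimono[OF sol _ _ x] assms by simp
    moreover have "lyapunov N u x + ?C * x ^ (N + 2) / real (N + 2)
        \<le> lyapunov N u (l + 1) + ?C * (l + 1) ^ (N + 2) / real (N + 2)"
      using lyapunov_growth_bound[OF sol _ _ x] assms by simp
    moreover have "0 \<le> ?C * x ^ (N + 2) / real (N + 2)"
      using B x \<open>0 < l\<close> \<open>2 \<le> N\<close> by (simp add: lyapunov_rate_nonneg)
    ultimately have "\<bar>lyapunov N u x\<bar> \<le> A" unfolding A_def by linarith
    moreover have "l ^ (N + 1) \<le> x ^ (N + 1)" using x \<open>0 < l\<close> by (intro power_mono) auto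
    ultimately have "\<bar>lyapunov N u x\<bar> / x ^ (N + 1) \<le> A / l ^ (N + 1)"
      using \<open>0 < l\<close> A by (intro frac_le) auto
    then have "\<bar>lyapunov N u x / x ^ (N + 1)\<bar> \<le> A / l ^ (N + 1)"
      using x \<open>0 < l\<close> by (simp add: abs_div)
    then show ?thesis
      using abs_deriv_sub_lyapunov_le[where u = u and N = N, OF _ x(2) pos_solD(2)[OF sol x(1)] bound[OF x(1)]]
        x \<open>0 < l\<close> unfolding abs_le_iff by linarith
  qed
  then show thesis using that by blast
qed

lemma bounded_pos_sol_extends_left:
  assumes sol: "pos_sol N u l" and "0 < l" "2 \<le> N" and bound: "\<And>x. l < x \<Longrightarrow> u x \<le> B"
  obtains a y p where "0 < a" "a < l" "\<And>x. a < x \<Longrightarrow> ode_sys N y p x" "\<And>x. l < x \<Longrightarrow> y x = u x"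
proof -
  obtain D where D: "\<And>x. l < x \<Longrightarrow> x \<le> l + 1 \<Longrightarrow> \<bar>deriv u x\<bar> \<le> D"
    using bounded_pos_sol_deriv_bounded[OF assms] by blast
  have "0 < l / 2" using \<open>0 < l\<close> by simp
  then obtain r where r: "0 < r" and local_sol: "\<And>\<rho> \<xi>0 Y0. 0 < \<rho> \<Longrightarrow> \<rho> \<le> r \<Longrightarrow>
      l / 2 \<le> \<xi>0 - \<rho> \<Longrightarrow> \<xi>0 + \<rho> \<le> l + 2 \<Longrightarrow> norm Y0 \<le> B + D \<Longrightarrow>
      \<exists>y p. (y \<xi>0, p \<xi>0) = Y0 \<and> (\<forall>x\<in>{\<xi>0 - \<rho><..<\<xi>0 + \<rho>}. ode_sys N y p x)"
    by (rule ode_sys_local_existence[where X = "l + 2" and B = "B + D" and N = N]) blast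
  define \<rho> where "\<rho> = min r (min (l / 2) (1 / 2))"
  \<comment> \<open>the local solution through \<open>\<xi>0\<close> then lives on an interval reaching below \<open>l\<close>\<close>
  define \<xi>0 where "\<xi>0 = l + \<rho> / 2"
  have \<rho>: "0 < \<rho>" "\<rho> \<le> r" "\<rho> \<le> l / 2" "\<rho> \<le> 1 / 2"
    using r \<open>0 < l\<close> by (auto simp: \<rho>_def)
  then have \<xi>0: "l < \<xi>0" "\<xi>0 \<le> l + 1" "l / 2 \<le> \<xi>0 - \<rho>" "\<xi>0 + \<rho> \<le> l + 2" "\<xi>0 - \<rho> < l"
    by (auto simp: \<xi>0_def)
  have "norm (u \<xi>0, deriv u \<xi>0) \<le> B + D"
    using norm_Pair_le[of "u \<xi>0" "deriv u \<xi>0"] bound[OF \<xi>0(1)] pos_solD(2)[OF sol \<xi>0(1)] D[OF \<xi>0(1,2)]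
    by simp
  then obtain y p where init: "y \<xi>0 = u \<xi>0" "p \<xi>0 = deriv u \<xi>0"
    and y_sys: "\<And>x. x \<in> {\<xi>0 - \<rho><..<\<xi>0 + \<rho>} \<Longrightarrow> ode_sys N y p x"
    using local_sol[OF \<rho>(1,2) \<xi>0(3,4)] by blast
  have agree: "y x = u x \<and> p x = deriv u x" if "x \<in> {l<..<\<xi>0 + \<rho>}" for x
    using that \<xi>0 \<rho> \<open>0 < l\<close> init y_sys pos_solD(1)[OF sol]
    by (intro ode_sys_unique[where l = l and r = "\<xi>0 + \<rho>" and t = \<xi>0]) auto
  show thesis
  proof (rule that[of "\<xi>0 - \<rho>"])
    show "0 < \<xi>0 - \<rho>" "\<xi>0 - \<rho> < l" using \<xi>0 \<open>0 < l\<close> by auto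
    show "ode_sys N (\<lambda>x. if x \<le> l then y x else u x) (\<lambda>x. if x \<le> l then p x else deriv u x) x"
      if "\<xi>0 - \<rho> < x" for x
      by (rule ode_sys_glue[OF y_sys pos_solD(1)[OF sol] agree]) (use \<xi>0 \<rho> that in auto)
  qed simp
qed

lemma positive_continuation_pos_sol:
  assumes sys: "\<And>x. a < x \<Longrightarrow> ode_sys N y p x" and "a < l"
    and pos: "\<And>x. l < x \<Longrightarrow> 0 < y x" and "0 < y l"
  obtains l' where "a \<le> l'" "l' < l" "pos_sol N y l'"
proof -
  have "isCont y l" using sys[OF \<open>a < l\<close>] by (auto simp: ode_sys_def intro: DERIV_isCont)
  then have "\<forall>\<^sub>F x in at l. 0 < y x"
    using \<open>0 < y l\<close> by (simp add: isCont_def order_tendstoD(1))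
  then obtain \<delta> where \<delta>: "0 < \<delta>" "\<And>x. x \<noteq> l \<Longrightarrow> dist x l < \<delta> \<Longrightarrow> 0 < y x"
    unfolding eventually_at by blast
  show thesis
  proof (rule that[of "max a (l - \<delta> / 2)"])
    show "a \<le> max a (l - \<delta> / 2)" "max a (l - \<delta> / 2) < l" using \<delta>(1) \<open>a < l\<close> by auto
    show "pos_sol N y (max a (l - \<delta> / 2))"
    proof (rule pos_solI)
      fix x assume x: "max a (l - \<delta> / 2) < x"
      show "ode_sys N y p x" using x sys by simp
      show "0 < y x"
        using pos[of x] \<delta>(2)[of x] \<open>0 < y l\<close> x
        by (cases x l rule: linorder_cases) (auto simp: dist_real_def)
    qed
  qed
qed

lemma bounded_pos_sol_tendsto_zero_at_ext_inf:
  assumes "0 < l0" "pos_sol N \<phi> l0" "2 \<le> N"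
    and sol: "pos_sol N \<Psi> (ext_inf N \<phi> l0)" and agree: "\<And>\<xi>. l0 < \<xi> \<Longrightarrow> \<Psi> \<xi> = \<phi> \<xi>"
    and pos: "0 < ext_inf N \<phi> l0" and bound: "\<And>x. ext_inf N \<phi> l0 < x \<Longrightarrow> \<Psi> x \<le> B"
  shows "(\<Psi> \<longlongrightarrow> 0) (at_right (ext_inf N \<phi> l0))"
proof -
  define ell where "ell = ext_inf N \<phi> l0"
  obtain a y p where a: "0 < a" "a < ell" and y_sys: "\<And>x. a < x \<Longrightarrow> ode_sys N y p x"
    and y_eq: "\<And>x. ell < x \<Longrightarrow> y x = \<Psi> x"
    using bounded_pos_sol_extends_left[OF sol pos assms(3) bound] unfolding ell_def by blast
  have "isCont y ell" using y_sys[OF a(2)] by (auto simp: ode_sys_def intro: DERIV_isCont)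
  then have "(y \<longlongrightarrow> y ell) (at_right ell)" by (simp add: isCont_def filterlim_at_split)
  moreover have "\<forall>\<^sub>F x in at_right ell. y x = \<Psi> x"
    unfolding eventually_at_right_field by (intro exI[of _ "ell + 1"]) (auto simp: y_eq)
  ultimately have lim: "(\<Psi> \<longlongrightarrow> y ell) (at_right ell)" by (rule Lim_transform_eventually)
  have y_pos: "0 < y x" if "ell < x" for x
    using y_eq[OF that] pos_solD(2)[OF sol] that by (simp add: ell_def)
  have "0 \<le> y ell"
    by (rule tendsto_lowerbound[OF lim])
       (auto simp: eventually_at_right_field y_eq[symmetric] y_pos less_imp_le intro: exI[of _ "ell + 1"])
  moreover have "\<not> 0 < y ell"
  proof
    assume "0 < y ell"
    then obtain l' where l': "a \<le> l'" "l' < ell" "pos_sol N y l'"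
      using positive_continuation_pos_sol[OF y_sys a(2) y_pos] by blast
    have "ell \<le> l0" unfolding ell_def using assms(1,2) by (intro ext_inf_le in_ext_levels)
    then have "l' \<in> ext_levels N \<phi> l0"
      using l' a y_eq agree by (auto simp: ext_levels_def)
    then show False using ext_inf_le l'(2) unfolding ell_def by fastforce
  qed
  ultimately show ?thesis using lim by (simp add: ell_def)
qed

lemma pos_sol_tail_bounded:
  assumes sol: "pos_sol N u l" and lim: "((\<lambda>\<xi>. u \<xi> * \<xi>\<^sup>2) \<longlongrightarrow> m) at_top" and "l < b"
  shows "\<exists>K. \<forall>x\<ge>b. u x \<le> K"
proof -
  obtain X where X: "\<And>x. X \<le> x \<Longrightarrow> u x * x\<^sup>2 < m + 1"
    using order_tendstoD(2)[OF lim, of "m + 1"] by (auto simp: eventually_at_top_linorder)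
  define X' where "X' = max X (max b 1)"
  have far: "u x \<le> m + 1" if "X' \<le> x" for x
  proof -
    have "u x * 1 \<le> u x * x\<^sup>2"
      using that pos_solD(2)[OF sol, of x] \<open>l < b\<close>
      by (intro mult_left_mono) (auto simp: X'_def one_le_power)
    then show ?thesis using X[of x] that by (simp add: X'_def)
  qed
  have "continuous_on {b..X'} u"
    using pos_solD(3)[OF sol] \<open>l < b\<close> by (meson DERIV_isCont atLeastAtMost_iff
        continuous_at_imp_continuous_on less_le_trans)
  then obtain K where K: "\<And>x. x \<in> {b..X'} \<Longrightarrow> \<bar>u x\<bar> \<le> K"
    using bounded_on_Icc by blast
  have "u x \<le> max (m + 1) K" if "b \<le> x" for x
    using far[of x] K[of x] that by (cases "X' \<le> x") auto
  then show ?thesis by blast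
qed

lemma ext_inf_trichotomy:
  assumes "0 < l0" "pos_sol N \<phi> l0" "2 \<le> N"
    and sol: "pos_sol N \<Psi> (ext_inf N \<phi> l0)" and agree: "\<And>\<xi>. l0 < \<xi> \<Longrightarrow> \<Psi> \<xi> = \<phi> \<xi>"
    and tail: "\<And>b. ext_inf N \<phi> l0 < b \<Longrightarrow> \<exists>K. \<forall>x\<ge>b. \<Psi> x \<le> K"
  defines "ell \<equiv> ext_inf N \<phi> l0"
  shows "(\<not> bounded (\<Psi> ` {ell<..}) \<and> filterlim \<Psi> at_top (at_right ell))
    \<or> (bounded (\<Psi> ` {ell<..}) \<and> 0 < ell \<and> (\<Psi> \<longlongrightarrow> 0) (at_right ell))
    \<or> (bounded (\<Psi> ` {ell<..}) \<and> ell = 0 \<and> (\<exists>L. (\<Psi> \<longlongrightarrow> L) (at_right 0))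
        \<and> (deriv \<Psi> \<longlongrightarrow> 0) (at_right 0))"
proof (cases "bounded (\<Psi> ` {ell<..})")
  case False
  have "0 \<le> ell" unfolding ell_def using assms(1,2) by (rule ext_inf_nonneg)
  then show ?thesis
    using unbounded_pos_sol_tendsto_infinity[OF sol[folded ell_def] _ assms(3) False] tail False
    unfolding ell_def by blast
next
  case True
  then obtain B where "\<forall>z\<in>\<Psi> ` {ell<..}. \<bar>z\<bar> \<le> B" unfolding bounded_iff by auto
  then have B: "\<And>x. ell < x \<Longrightarrow> \<Psi> x \<le> B" by (auto simp: abs_le_iff)
  have "0 \<le> ell" unfolding ell_def using assms(1,2) by (rule ext_inf_nonneg)
  then consider "ell = 0" | "0 < ell" by linarith
  then show ?thesis
  proof cases
    case 1
    then show ?thesis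
      using bounded_pos_sol_at_zero[OF sol[folded ell_def, unfolded 1] assms(3)] B True by auto
  next
    case 2
    then show ?thesis
      using bounded_pos_sol_tendsto_zero_at_ext_inf[OF assms(1-5)] B True unfolding ell_def by auto
  qed
qed

theorem lemma3p4:
  fixes N :: nat and m l0 :: real and \<phi> :: "real \<Rightarrow> real"
  assumes "N \<ge> 3" and "m > 0" and "l0 > 0"
    and "pos_sol N \<phi> l0"
    and "((\<lambda>\<xi>. \<phi> \<xi> * \<xi>\<^sup>2) \<longlongrightarrow> m) at_top"
  shows "\<exists>\<psi>. pos_sol N \<psi> (ext_inf N \<phi> l0) \<and> (\<forall>\<xi>>l0. \<psi> \<xi> = \<phi> \<xi>) \<and>
    (let ell = ext_inf N \<phi> l0;
         C1 = (\<not> bounded (\<psi> ` {ell<..}) \<and> filterlim \<psi> at_top (at_right ell));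
         C2 = (bounded (\<psi> ` {ell<..}) \<and> ell > 0 \<and> (\<psi> \<longlongrightarrow> 0) (at_right ell));
         C3 = (bounded (\<psi> ` {ell<..}) \<and> ell = 0 \<and> (\<exists>L. (\<psi> \<longlongrightarrow> L) (at_right 0))
               \<and> (deriv \<psi> \<longlongrightarrow> 0) (at_right 0))
     in (C1 \<and> \<not> C2 \<and> \<not> C3) \<or> (\<not> C1 \<and> C2 \<and> \<not> C3) \<or> (\<not> C1 \<and> \<not> C2 \<and> C3))"
proof -
  obtain \<Psi> where sol: "pos_sol N \<Psi> (ext_inf N \<phi> l0)" and agree: "\<And>\<xi>. l0 < \<xi> \<Longrightarrow> \<Psi> \<xi> = \<phi> \<xi>"
    using ext_inf_solution[OF assms(3,4)] by blast
  have "((\<lambda>\<xi>. \<Psi> \<xi> * \<xi>\<^sup>2) \<longlongrightarrow> m) at_top"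
    using assms(5) by (rule Lim_transform_eventually)
       (auto simp: agree eventually_at_top_dense intro: exI[of _ l0])
  then have "\<exists>K. \<forall>x\<ge>b. \<Psi> x \<le> K" if "ext_inf N \<phi> l0 < b" for b
    using pos_sol_tail_bounded[OF sol _ that] by blast
  moreover have "2 \<le> N" using assms(1) by simp
  \<comment> \<open>\<open>N \<ge> 2\<close> and the boundedness of \<open>\<phi>\<close> at infinity suffice\<close>
  ultimately show ?thesis
    using ext_inf_trichotomy[OF assms(3,4) _ sol agree] sol agree unfolding Let_def by auto
qed

end
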